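(* Let $c \geq 1$ and $t$ be integers, let $G$ be a graph of matching width at least $t$, and let $Z$ be a $c$-NSOBDD computing $CNF(G)$. Then $|Z| \geq 2^{t/(2c-1)}$.
   Context: For a graph $G$, the CNF $CNF(G)$ has a variable $X_u$ for each vertex $u$ and a variable $X_{u,v}=X_{v,u}$ for each edge $\{u,v\}$; its clauses are $(X_u \vee X_{u,v} \vee X_v)$ for each edge $\{u,v\}$. Matching width: for a permutation $SV$ of $V(G)$ and a prefix $S_1$ of $SV$, the matching width of $S_1$ is the maximum size of a matching consisting of edges between $S_1$ and $V(G)\setminus S_1$; the matching width of $SV$ is the maximum over its prefixes; the matching width of $G$ is the minimum over all permutations $SV$ of $V(G)$. A non-deterministic branching program is a directed acyclic graph with one root and one leaf, some of whose edges are labelled by literals of variables. A path is consistent if it does not contain two edges labelled by opposite literals of the same variable; a consistent root-leaf path is a computational path. The program computes $F$: an assignment $S$ (as a set of literals) satisfies $F$ iff some computational path has all its labels in $S$. A $c$-NSOBDD is such a program for which there is a permutation $SV$ of its variables such that every computational path $P$ can be written as $P=P_1+\dots+P_c$ (concatenation of subpaths) where on each $P_i$ each variable occurs at most once and the labels along $P_i$ are ordered according to $SV$. $|Z|$ denotes the number of nodes of $Z$. *)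

theory Defs
  imports Complex_Main
begin

definition graph :: "'v set \<Rightarrow> 'v set set \<Rightarrow> bool" where
  "graph V E \<longleftrightarrow> finite V \<and> (\<forall>e\<in>E. \<exists>u v. u \<in> V \<and> v \<in> V \<and> u \<noteq> v \<and> e = {u, v})"

definition cross_matching :: "'v set \<Rightarrow> 'v set set \<Rightarrow> 'v set \<Rightarrow> 'v set set \<Rightarrow> bool" where
  "cross_matching V E S M \<longleftrightarrow> M \<subseteq> E \<and>
     (\<forall>e\<in>M. e \<inter> S \<noteq> {} \<and> e \<inter> (V - S) \<noteq> {}) \<and>
     (\<forall>e\<in>M. \<forall>e'\<in>M. e \<noteq> e' \<longrightarrow> e \<inter> e' = {})"

definition mw_prefix :: "'v set \<Rightarrow> 'v set set \<Rightarrow> 'v set \<Rightarrow> nat" where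
  "mw_prefix V E S = Max {card M | M. cross_matching V E S M}"

definition mw_perm :: "'v set \<Rightarrow> 'v set set \<Rightarrow> 'v list \<Rightarrow> nat" where
  "mw_perm V E SV = Max {mw_prefix V E (set (take k SV)) | k. k \<le> length SV}"

definition matching_width :: "'v set \<Rightarrow> 'v set set \<Rightarrow> nat" where
  "matching_width V E = Min (mw_perm V E ` {SV. distinct SV \<and> set SV = V})"

text \<open>Variables: X_u for vertices, X_{u,v} for edges (an edge is the set {u,v}, so X_{u,v}=X_{v,u}).\<close>
datatype 'v cvar = XV 'v | XE "'v set"

text \<open>Literals: (x, True) is the positive literal x, (x, False) its negation.\<close>
type_synonym 'x lit = "'x \<times> bool"

definition cnf_vars :: "'v set \<Rightarrow> 'v set set \<Rightarrow> 'v cvar set" where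
  "cnf_vars V E = XV ` V \<union> XE ` E"

definition edge_clause :: "'v set \<Rightarrow> 'v cvar lit set" where
  "edge_clause e = {(XV u, True) | u. u \<in> e} \<union> {(XE e, True)}"

definition CNF :: "'v set set \<Rightarrow> 'v cvar lit set set" where
  "CNF E = edge_clause ` E"

definition cnf_sat :: "'x lit set set \<Rightarrow> 'x lit set \<Rightarrow> bool" where
  "cnf_sat F S \<longleftrightarrow> (\<forall>C\<in>F. C \<inter> S \<noteq> {})"

definition is_assignment :: "'x set \<Rightarrow> 'x lit set \<Rightarrow> bool" where
  "is_assignment X S \<longleftrightarrow> S \<subseteq> X \<times> UNIV \<and> (\<forall>x\<in>X. ((x, True) \<in> S) \<noteq> ((x, False) \<in> S))"

text \<open>A program is given by a node set N, a set A of edges (source, optional literal label, target),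
  a root r and a leaf l.\<close>
type_synonym ('n, 'x) bp_edge = "'n \<times> 'x lit option \<times> 'n"

fun path_from :: "('n, 'x) bp_edge set \<Rightarrow> 'n \<Rightarrow> ('n, 'x) bp_edge list \<Rightarrow> 'n \<Rightarrow> bool" where
  "path_from A u [] w \<longleftrightarrow> u = w"
| "path_from A u ((a, lab, b) # es) w \<longleftrightarrow> (a, lab, b) \<in> A \<and> a = u \<and> path_from A b es w"

definition labels :: "('n, 'x) bp_edge list \<Rightarrow> 'x lit list" where
  "labels es = List.map_filter (\<lambda>(a, lab, b). lab) es"

definition consistent_path :: "('n, 'x) bp_edge list \<Rightarrow> bool" where
  "consistent_path es \<longleftrightarrow> \<not> (\<exists>x. (x, True) \<in> set (labels es) \<and> (x, False) \<in> set (labels es))"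

definition bp_vars :: "('n, 'x) bp_edge set \<Rightarrow> 'x set" where
  "bp_vars A = {x. \<exists>a b pol. (a, Some (x, pol), b) \<in> A}"

definition nbp :: "'x set \<Rightarrow> 'n set \<Rightarrow> ('n, 'x) bp_edge set \<Rightarrow> 'n \<Rightarrow> 'n \<Rightarrow> bool" where
  "nbp X N A r l \<longleftrightarrow> finite N \<and> finite A \<and>
     (\<forall>(a, lab, b)\<in>A. a \<in> N \<and> b \<in> N) \<and>
     (\<forall>u es. es \<noteq> [] \<longrightarrow> \<not> path_from A u es u) \<and>
     {u \<in> N. \<not> (\<exists>a lab. (a, lab, u) \<in> A)} = {r} \<and>
     {u \<in> N. \<not> (\<exists>lab b. (u, lab, b) \<in> A)} = {l} \<and>
     bp_vars A \<subseteq> X"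

definition computational_path :: "('n, 'x) bp_edge set \<Rightarrow> 'n \<Rightarrow> 'n \<Rightarrow> ('n, 'x) bp_edge list \<Rightarrow> bool" where
  "computational_path A r l es \<longleftrightarrow> path_from A r es l \<and> consistent_path es"

definition bp_computes :: "'x set \<Rightarrow> ('n, 'x) bp_edge set \<Rightarrow> 'n \<Rightarrow> 'n \<Rightarrow> ('x lit set \<Rightarrow> bool) \<Rightarrow> bool" where
  "bp_computes X A r l F \<longleftrightarrow> (\<forall>S. is_assignment X S \<longrightarrow>
     (F S \<longleftrightarrow> (\<exists>es. computational_path A r l es \<and> set (labels es) \<subseteq> S)))"

definition before :: "'x list \<Rightarrow> 'x \<Rightarrow> 'x \<Rightarrow> bool" where
  "before SV x y \<longleftrightarrow> (\<exists>i j. i < j \<and> j < length SV \<and> SV ! i = x \<and> SV ! j = y)"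

text \<open>c-NSOBDD: there is a permutation SV of the program's variables such that every
  computational path splits into c consecutive subpaths, each of which reads its variables
  at most once and in the order SV (strict increase in SV enforces both).\<close>
definition c_NSOBDD :: "nat \<Rightarrow> 'x set \<Rightarrow> 'n set \<Rightarrow> ('n, 'x) bp_edge set \<Rightarrow> 'n \<Rightarrow> 'n \<Rightarrow> bool" where
  "c_NSOBDD c X N A r l \<longleftrightarrow> nbp X N A r l \<and>
     (\<exists>SV. distinct SV \<and> set SV = bp_vars A \<and>
        (\<forall>es. computational_path A r l es \<longrightarrow>
           (\<exists>Ps. length Ps = c \<and> concat Ps = es \<and>
              (\<forall>P\<in>set Ps. sorted_wrt (before SV) (map fst (labels P))))))"

end

theory Submission
  imports Defs
begin

text \<open>
  A prefix S of a suitable vertex order carries a cross matching M with |M| \<ge> t, and since that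
  vertex order is induced by the program's variable order, the variables on the S side extend to a
  set C of variables that is downward closed in the variable order. For I \<subseteq> M let \<sigma>(I) make the
  edge variables of M false and give each e \<in> M exactly one true endpoint, the one in S iff e \<in> I;
  every \<sigma>(I) satisfies CNF(G). An accepting path for \<sigma>(I) reads its variables in c passes, so it
  splits into 2c blocks reading alternately only variables in C and only variables outside C;
  record the 2c - 1 nodes between the blocks. If I \<noteq> J gave the same nodes, gluing the blocks of
  the two paths would give accepting paths for both mixtures of \<sigma>(I) and \<sigma>(J), but one of the
  mixtures falsifies the clause of an edge in the symmetric difference of I and J.
  Hence 2 ^ t \<le> |N| ^ (2c - 1).
\<close>

lemma path_from_append:
  "path_from A u (xs @ ys) w \<longleftrightarrow> (\<exists>m. path_from A u xs m \<and> path_from A m ys w)"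
  by (induction xs arbitrary: u) auto

lemma path_from_concat:
  assumes "Bs \<noteq> []"
  shows "path_from A u (concat Bs) w \<longleftrightarrow>
    (\<exists>ns. length ns + 1 = length Bs \<and>
       (\<forall>j<length Bs. path_from A ((u # ns) ! j) (Bs ! j) ((ns @ [w]) ! j)))"
  using assms
proof (induction Bs arbitrary: u)
  case Nil
  then show ?case by simp
next
  case (Cons B Bs)
  show ?case
  proof (cases "Bs = []")
    case True
    then show ?thesis by auto
  next
    case False
    have "path_from A u (concat (B # Bs)) w \<longleftrightarrow>
      (\<exists>m ns. path_from A u B m \<and> length ns + 1 = length Bs \<and>
         (\<forall>j<length Bs. path_from A ((m # ns) ! j) (Bs ! j) ((ns @ [w]) ! j)))"
      using Cons.IH[OF False] by (auto simp: path_from_append)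
    also have "\<dots> \<longleftrightarrow> (\<exists>ns. length ns + 1 = length (B # Bs) \<and>
         (\<forall>j<length (B # Bs). path_from A ((u # ns) ! j) ((B # Bs) ! j) ((ns @ [w]) ! j)))"
      (is "?L \<longleftrightarrow> ?R")
    proof
      assume ?L
      then obtain m ns where "path_from A u B m" "length ns + 1 = length Bs"
        "\<forall>j<length Bs. path_from A ((m # ns) ! j) (Bs ! j) ((ns @ [w]) ! j)" by blast
      then show ?R by (intro exI[of _ "m # ns"]) (simp add: All_less_Suc2)
    next
      assume ?R
      then obtain ns where ns: "length ns = length Bs"
        "\<forall>j<Suc (length Bs). path_from A ((u # ns) ! j) ((B # Bs) ! j) ((ns @ [w]) ! j)" by auto
      with False obtain m ns' where "ns = m # ns'" by (cases ns) auto
      with ns show ?L by (auto simp: All_less_Suc2)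
    qed
    finally show ?thesis .
  qed
qed

lemma path_from_nodes:
  assumes "path_from A u es w" and "\<forall>(a, lab, b)\<in>A. a \<in> N \<and> b \<in> N" and "u \<in> N"
  shows "w \<in> N"
  using assms by (induction es arbitrary: u) force+

lemma labels_Nil [simp]: "labels [] = []"
  by (simp add: labels_def)

lemma labels_Cons_None [simp]: "labels ((a, None, b) # es) = labels es"
  by (simp add: labels_def)

lemma labels_Cons_Some [simp]: "labels ((a, Some lit, b) # es) = lit # labels es"
  by (simp add: labels_def)

lemma labels_append [simp]: "labels (xs @ ys) = labels xs @ labels ys"
  by (simp add: labels_def map_filter_def)

lemma set_labels_concat: "set (labels (concat Bs)) = (\<Union>B\<in>set Bs. set (labels B))"
  by (induction Bs) auto

definition assignment_of :: "'x set \<Rightarrow> ('x \<Rightarrow> bool) \<Rightarrow> 'x lit set" where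
  "assignment_of X f = {(x, f x) | x. x \<in> X}"

lemma mem_assignment_of [simp]: "(x, b) \<in> assignment_of X f \<longleftrightarrow> x \<in> X \<and> b = f x"
  by (auto simp: assignment_of_def)

lemma is_assignment_assignment_of: "is_assignment X (assignment_of X f)"
  by (auto simp: is_assignment_def)

lemma assignment_of_mix:
  "{p \<in> assignment_of X f. fst p \<in> C} \<union> {p \<in> assignment_of X g. fst p \<notin> C} =
   assignment_of X (\<lambda>x. if x \<in> C then f x else g x)"
  by auto

lemma consistent_path_if_labels_in_assignment:
  assumes "is_assignment X S" and "set (labels es) \<subseteq> S"
  shows "consistent_path es"
proof -
  have "(x, True) \<notin> S \<or> (x, False) \<notin> S" for x
    using assms(1) unfolding is_assignment_def by (cases "x \<in> X") auto
  then show ?thesis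
    using assms(2) unfolding consistent_path_def by blast
qed

section \<open>Cutting a path along the variable order\<close>

definition down_closed :: "'x list \<Rightarrow> 'x set \<Rightarrow> bool" where
  "down_closed SV C \<longleftrightarrow> (\<forall>x y. before SV x y \<longrightarrow> y \<in> C \<longrightarrow> x \<in> C)"

lemma before_in_set: "before SV x y \<Longrightarrow> y \<in> set SV"
  by (auto simp: before_def)

lemma down_closed_take:
  assumes "distinct SV"
  shows "down_closed SV (set (take k SV))"
  unfolding down_closed_def
proof (intro allI impI)
  fix x y assume "before SV x y" and y: "y \<in> set (take k SV)"
  then obtain i j where ij: "i < j" "j < length SV" "SV ! i = x" "SV ! j = y"
    by (auto simp: before_def)
  from y obtain j' where "j' < min k (length SV)" "SV ! j' = y"
    by (auto simp: in_set_conv_nth)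
  with ij assms have "j < k" by (metis min_less_iff_conj nth_eq_iff_index_eq)
  with ij show "x \<in> set (take k SV)" by (auto simp: in_set_conv_nth intro!: exI[of _ i])
qed

lemma down_closed_Un:
  assumes "down_closed SV C" and "D \<inter> set SV \<subseteq> C"
  shows "down_closed SV (C \<union> D)"
  using assms unfolding down_closed_def by (blast dest: before_in_set)

definition reads_in :: "'x set \<Rightarrow> ('n, 'x) bp_edge \<Rightarrow> bool" where
  "reads_in C e \<longleftrightarrow> (\<forall>x pol. fst (snd e) = Some (x, pol) \<longrightarrow> x \<in> C)"

lemma labels_takeWhile_reads_in:
  "lit \<in> set (labels (takeWhile (reads_in C) P)) \<Longrightarrow> fst lit \<in> C"
proof (induction P)
  case (Cons e P)
  obtain a lab b where e: "e = (a, lab, b)" by (cases e)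
  show ?case using Cons by (cases lab) (auto simp: e reads_in_def split: if_splits)
qed simp

lemma labels_dropWhile_reads_in:
  assumes "down_closed SV C" and "sorted_wrt (before SV) (map fst (labels P))"
    and "lit \<in> set (labels (dropWhile (reads_in C) P))"
  shows "fst lit \<notin> C"
  using assms(2,3)
proof (induction P)
  case (Cons e P)
  obtain a lab b where e: "e = (a, lab, b)" by (cases e)
  show ?case
  proof (cases "reads_in C e")
    case True
    then show ?thesis using Cons by (cases lab) (auto simp: e)
  next
    case False
    then obtain x pol where lab: "lab = Some (x, pol)" and "x \<notin> C"
      by (auto simp: reads_in_def e)
    moreover have "lit = (x, pol) \<or> before SV x (fst lit)"
      using Cons.prems False by (auto simp: e lab)
    ultimately show ?thesis using assms(1) unfolding down_closed_def by auto
  qed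
qed simp

definition reads_in_passes :: "nat \<Rightarrow> 'x list \<Rightarrow> ('n, 'x) bp_edge list \<Rightarrow> bool" where
  "reads_in_passes c SV es \<longleftrightarrow> (\<exists>Ps. length Ps = c \<and> concat Ps = es \<and>
     (\<forall>P\<in>set Ps. sorted_wrt (before SV) (map fst (labels P))))"

lemma c_NSOBDD_iff_reads_in_passes:
  "c_NSOBDD c X N A r l \<longleftrightarrow> nbp X N A r l \<and> (\<exists>SV. distinct SV \<and> set SV = bp_vars A \<and>
     (\<forall>es. computational_path A r l es \<longrightarrow> reads_in_passes c SV es))"
  by (simp add: c_NSOBDD_def reads_in_passes_def)

definition switching_nodes ::
  "('n, 'x) bp_edge set \<Rightarrow> 'n \<Rightarrow> 'n \<Rightarrow> 'x set \<Rightarrow> 'x lit set \<Rightarrow> 'n list \<Rightarrow> bool" where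
  "switching_nodes A r l C \<sigma> ns \<longleftrightarrow> (\<exists>Bs. length Bs = length ns + 1 \<and>
     (\<forall>j<length Bs. path_from A ((r # ns) ! j) (Bs ! j) ((ns @ [l]) ! j) \<and>
        (\<forall>lit\<in>set (labels (Bs ! j)). lit \<in> \<sigma> \<and> (fst lit \<in> C \<longleftrightarrow> even j))))"

lemma nth_concat_map_pair:
  "j < 2 * length xs \<Longrightarrow> concat (map (\<lambda>x. [f x, g x]) xs) ! j =
     (if even j then f (xs ! (j div 2)) else g (xs ! (j div 2)))"
proof (induction xs arbitrary: j)
  case (Cons x xs)
  show ?case
  proof (cases "j < 2")
    case True
    then show ?thesis by (auto simp: less_2_cases_iff)
  next
    case False
    then obtain i where "j = Suc (Suc i)" by (metis add_2_eq_Suc le_add_diff_inverse not_less)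
    with Cons show ?thesis by auto
  qed
qed simp

lemma switching_nodes_exist:
  assumes "c \<ge> 1" and "down_closed SV C"
    and path: "path_from A r es l" and lab: "set (labels es) \<subseteq> \<sigma>"
    and "reads_in_passes c SV es"
  shows "\<exists>ns. length ns = 2 * c - 1 \<and> switching_nodes A r l C \<sigma> ns"
proof -
  obtain Ps where Ps: "length Ps = c" "concat Ps = es"
    and sorted: "\<forall>P\<in>set Ps. sorted_wrt (before SV) (map fst (labels P))"
    using assms(5) unfolding reads_in_passes_def by blast
  define Bs where "Bs = concat (map (\<lambda>P. [takeWhile (reads_in C) P, dropWhile (reads_in C) P]) Ps)"
  have concat_Bs: "concat Bs = es"
    unfolding Bs_def using Ps(2) by (induction Ps arbitrary: es) auto
  have len: "length Bs = 2 * c"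
    unfolding Bs_def using Ps(1) by (induction Ps arbitrary: c) auto
  then have "Bs \<noteq> []"
    using \<open>c \<ge> 1\<close> by auto
  then obtain ns where ns: "length ns + 1 = 2 * c"
    "\<forall>j<2 * c. path_from A ((r # ns) ! j) (Bs ! j) ((ns @ [l]) ! j)"
    using path_from_concat[of Bs A r l] path concat_Bs len by auto
  have "\<forall>lit\<in>set (labels (Bs ! j)). lit \<in> \<sigma> \<and> (fst lit \<in> C \<longleftrightarrow> even j)" if j: "j < 2 * c" for j
  proof -
    have "set (labels (Bs ! j)) \<subseteq> set (labels es)"
      using j len concat_Bs set_labels_concat[of Bs] by (metis UN_upper nth_mem)
    moreover have "Ps ! (j div 2) \<in> set Ps"
      using j Ps(1) by simp
    moreover have "Bs ! j = (if even j then takeWhile (reads_in C) (Ps ! (j div 2))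
                              else dropWhile (reads_in C) (Ps ! (j div 2)))"
      unfolding Bs_def
      using nth_concat_map_pair[of j Ps "takeWhile (reads_in C)" "dropWhile (reads_in C)"] j Ps(1)
      by simp
    ultimately show ?thesis
      using lab labels_takeWhile_reads_in labels_dropWhile_reads_in[OF assms(2)] sorted
      by (cases "even j") fastforce+
  qed
  with ns len have "switching_nodes A r l C \<sigma> ns"
    unfolding switching_nodes_def by metis
  moreover have "length ns = 2 * c - 1"
    using ns(1) by simp
  ultimately show ?thesis by blast
qed

lemma switching_nodes_subset:
  assumes "switching_nodes A r l C \<sigma> ns"
    and edges: "\<forall>(a, lab, b)\<in>A. a \<in> N \<and> b \<in> N" and "r \<in> N"
  shows "set ns \<subseteq> N"
proof -
  obtain Bs where len: "length Bs = length ns + 1"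
    and blocks: "\<forall>j<length Bs. path_from A ((r # ns) ! j) (Bs ! j) ((ns @ [l]) ! j)"
    using assms(1) unfolding switching_nodes_def by blast
  have "(r # ns) ! j \<in> N" if "j \<le> length ns" for j
    using that
  proof (induction j)
    case 0
    then show ?case using \<open>r \<in> N\<close> by simp
  next
    case (Suc j)
    then have "j < length ns" by simp
    with blocks len have "path_from A ((r # ns) ! j) (Bs ! j) ((ns @ [l]) ! j)"
      by simp
    then have "path_from A ((r # ns) ! j) (Bs ! j) (ns ! j)"
      using \<open>j < length ns\<close> by (simp add: nth_append)
    with Suc show ?case
      using path_from_nodes[OF _ edges] by simp
  qed
  then have "ns ! i \<in> N" if "i < length ns" for i
    using that by (metis Suc_leI nth_Cons_Suc)
  then show ?thesis
    by (auto simp: in_set_conv_nth)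
qed

lemma switching_nodes_splice:
  assumes "switching_nodes A r l C \<sigma>1 ns" and "switching_nodes A r l C \<sigma>2 ns"
  shows "\<exists>es. path_from A r es l \<and>
    set (labels es) \<subseteq> {p \<in> \<sigma>1. fst p \<in> C} \<union> {p \<in> \<sigma>2. fst p \<notin> C}"
proof -
  obtain Bs1 where len1: "length Bs1 = length ns + 1"
    and Bs1: "\<forall>j<length Bs1. path_from A ((r # ns) ! j) (Bs1 ! j) ((ns @ [l]) ! j) \<and>
        (\<forall>lit\<in>set (labels (Bs1 ! j)). lit \<in> \<sigma>1 \<and> (fst lit \<in> C \<longleftrightarrow> even j))"
    using assms(1) unfolding switching_nodes_def by blast
  obtain Bs2 where len2: "length Bs2 = length ns + 1"
    and Bs2: "\<forall>j<length Bs2. path_from A ((r # ns) ! j) (Bs2 ! j) ((ns @ [l]) ! j) \<and>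
        (\<forall>lit\<in>set (labels (Bs2 ! j)). lit \<in> \<sigma>2 \<and> (fst lit \<in> C \<longleftrightarrow> even j))"
    using assms(2) unfolding switching_nodes_def by blast
  define Bs where "Bs = map (\<lambda>j. if even j then Bs1 ! j else Bs2 ! j) [0..<length Bs1]"
  have "Bs \<noteq> []" and "length ns + 1 = length Bs"
    using len1 by (simp_all add: Bs_def)
  moreover have "\<forall>j<length Bs. path_from A ((r # ns) ! j) (Bs ! j) ((ns @ [l]) ! j)"
    using Bs1 Bs2 len1 len2 by (simp add: Bs_def del: upt_Suc)
  ultimately have "path_from A r (concat Bs) l"
    using path_from_concat[of Bs A r l] by blast
  moreover have "set (labels (Bs ! j)) \<subseteq> {p \<in> \<sigma>1. fst p \<in> C} \<union> {p \<in> \<sigma>2. fst p \<notin> C}"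
    if j: "j < length Bs" for j
  proof (cases "even j")
    case True
    with j len1 have "Bs ! j = Bs1 ! j"
      by (simp add: Bs_def del: upt_Suc)
    moreover have "\<forall>lit\<in>set (labels (Bs1 ! j)). lit \<in> \<sigma>1 \<and> fst lit \<in> C"
      using Bs1 True j len1 \<open>length ns + 1 = length Bs\<close> by simp
    ultimately show ?thesis by auto
  next
    case False
    with j len1 have "Bs ! j = Bs2 ! j"
      by (simp add: Bs_def del: upt_Suc)
    moreover have "\<forall>lit\<in>set (labels (Bs2 ! j)). lit \<in> \<sigma>2 \<and> fst lit \<notin> C"
      using Bs2 False j len2 \<open>length ns + 1 = length Bs\<close> by simp
    ultimately show ?thesis by auto
  qed
  then have "set (labels (concat Bs)) \<subseteq> {p \<in> \<sigma>1. fst p \<in> C} \<union> {p \<in> \<sigma>2. fst p \<notin> C}"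
    unfolding set_labels_concat by (intro UN_least) (auto simp: in_set_conv_nth)
  ultimately show ?thesis by blast
qed

section \<open>Fooling families for c-NSOBDDs\<close>

lemma bp_computes_iff:
  assumes "bp_computes X A r l F" and "is_assignment X S"
  shows "F S \<longleftrightarrow> (\<exists>es. computational_path A r l es \<and> set (labels es) \<subseteq> S)"
  using assms unfolding bp_computes_def by simp

lemma switching_nodes_mix_accepted:
  assumes "bp_computes X A r l F"
    and "switching_nodes A r l C (assignment_of X f) ns"
    and "switching_nodes A r l C (assignment_of X g) ns"
  shows "F (assignment_of X (\<lambda>x. if x \<in> C then f x else g x))"
proof -
  obtain es where path: "path_from A r es l"
    and lab: "set (labels es) \<subseteq> assignment_of X (\<lambda>x. if x \<in> C then f x else g x)"
    using switching_nodes_splice[OF assms(2,3)] unfolding assignment_of_mix by blast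
  have "consistent_path es"
    using consistent_path_if_labels_in_assignment[OF is_assignment_assignment_of lab] .
  with path lab show ?thesis
    unfolding bp_computes_iff[OF assms(1) is_assignment_assignment_of] computational_path_def
    by blast
qed

lemma card_fooling_family_le:
  fixes f :: "'i \<Rightarrow> 'x \<Rightarrow> bool"
  assumes "c \<ge> 1" and "nbp X N A r l"
    and passes: "\<forall>es. computational_path A r l es \<longrightarrow> reads_in_passes c SV es"
    and "down_closed SV C"
    and computes: "bp_computes X A r l F"
    and accepted: "\<And>i. i \<in> I \<Longrightarrow> F (assignment_of X (f i))"
    and fooling: "\<And>i j. i \<in> I \<Longrightarrow> j \<in> I \<Longrightarrow>
        F (assignment_of X (\<lambda>x. if x \<in> C then f i x else f j x)) \<Longrightarrow>
        F (assignment_of X (\<lambda>x. if x \<in> C then f j x else f i x)) \<Longrightarrow> i = j"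
  shows "card I \<le> card N ^ (2 * c - 1)"
proof -
  have edges: "\<forall>(a, lab, b)\<in>A. a \<in> N \<and> b \<in> N" and "finite N"
    using assms(2) unfolding nbp_def by simp_all
  have "r \<in> N"
    using assms(2) unfolding nbp_def by blast
  have "\<exists>ns. set ns \<subseteq> N \<and> length ns = 2 * c - 1 \<and>
      switching_nodes A r l C (assignment_of X (f i)) ns" if i: "i \<in> I" for i
  proof -
    obtain es where cp: "computational_path A r l es"
      and lab: "set (labels es) \<subseteq> assignment_of X (f i)"
      using accepted[OF i] bp_computes_iff[OF computes is_assignment_assignment_of] by blast
    have "path_from A r es l"
      using cp by (simp add: computational_path_def)
    then obtain ns where "length ns = 2 * c - 1"
      and sw: "switching_nodes A r l C (assignment_of X (f i)) ns"
      using switching_nodes_exist[OF assms(1,4) _ lab] passes cp by blast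
    then show ?thesis
      using switching_nodes_subset[OF sw edges \<open>r \<in> N\<close>] by blast
  qed
  then obtain ns where ns: "\<And>i. i \<in> I \<Longrightarrow> set (ns i) \<subseteq> N \<and> length (ns i) = 2 * c - 1 \<and>
      switching_nodes A r l C (assignment_of X (f i)) (ns i)"
    by metis
  have "inj_on ns I"
  proof (rule inj_onI)
    fix i j assume i: "i \<in> I" and j: "j \<in> I" and eq: "ns i = ns j"
    have "switching_nodes A r l C (assignment_of X (f i)) (ns i)"
      using ns[OF i] by blast
    moreover have "switching_nodes A r l C (assignment_of X (f j)) (ns i)"
      using ns[OF j] eq by simp
    ultimately show "i = j"
      using fooling[OF i j] switching_nodes_mix_accepted[OF computes] by blast
  qed
  then have "card I \<le> card {xs. set xs \<subseteq> N \<and> length xs = 2 * c - 1}"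
    using ns finite_lists_length_eq[OF \<open>finite N\<close>] by (intro card_inj_on_le) auto
  then show ?thesis
    using card_lists_length_eq[OF \<open>finite N\<close>] by simp
qed

section \<open>Assignments from a cross matching\<close>

lemma graph_edge_subset:
  assumes "graph V E" and "e \<in> E"
  shows "e \<subseteq> V"
  using assms unfolding graph_def by fastforce

lemma finite_edges:
  assumes "graph V E"
  shows "finite E"
proof -
  have "E \<subseteq> Pow V"
    using graph_edge_subset[OF assms] by blast
  moreover have "finite V"
    using assms unfolding graph_def by simp
  ultimately show ?thesis
    by (simp add: finite_subset)
qed

text \<open>Edge variables are false exactly on M, and every edge of M has exactly one true endpoint:
  its endpoint in S if the edge lies in I, its other endpoint otherwise.\<close>
definition matching_assignment :: "'v set set \<Rightarrow> 'v set \<Rightarrow> 'v set set \<Rightarrow> 'v cvar \<Rightarrow> bool" where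
  "matching_assignment M S I x = (case x of
       XV w \<Rightarrow> \<not> (\<exists>e\<in>M. w \<in> e \<and> (e \<in> I \<longleftrightarrow> w \<notin> S))
     | XE e \<Rightarrow> e \<notin> M)"

lemma cnf_sat_matching_assignment:
  assumes "graph V E" and cm: "cross_matching V E S M"
  shows "cnf_sat (CNF E) (assignment_of (cnf_vars V E) (matching_assignment M S I))"
  unfolding cnf_sat_def CNF_def
proof
  fix C assume "C \<in> edge_clause ` E"
  then obtain e where e: "e \<in> E" "C = edge_clause e" by blast
  show "C \<inter> assignment_of (cnf_vars V E) (matching_assignment M S I) \<noteq> {}"
  proof (cases "e \<in> M")
    case False
    with e have "(XE e, True) \<in> C \<inter> assignment_of (cnf_vars V E) (matching_assignment M S I)"
      by (simp add: edge_clause_def cnf_vars_def matching_assignment_def)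
    then show ?thesis by blast
  next
    case True
    with cm have "e \<inter> S \<noteq> {}" and "e \<inter> (V - S) \<noteq> {}"
      unfolding cross_matching_def by blast+
    then obtain w where w: "w \<in> e" "w \<in> S \<longleftrightarrow> e \<in> I"
      by (cases "e \<in> I") blast+
    have "e' = e" if "e' \<in> M" "w \<in> e'" for e'
      using cm True w(1) that unfolding cross_matching_def by blast
    with w(2) have "\<not> (\<exists>e'\<in>M. w \<in> e' \<and> (e' \<in> I \<longleftrightarrow> w \<notin> S))"
      by blast
    then have "matching_assignment M S I (XV w)"
      by (simp add: matching_assignment_def)
    moreover have "XV w \<in> cnf_vars V E"
      using graph_edge_subset[OF assms(1) e(1)] w(1) by (auto simp: cnf_vars_def)
    ultimately have "(XV w, True) \<in> C \<inter> assignment_of (cnf_vars V E) (matching_assignment M S I)"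
      using e w(1) by (auto simp: edge_clause_def)
    then show ?thesis by blast
  qed
qed

lemma matching_assignment_mix_falsifies:
  assumes "e \<in> E" and "e \<in> M" and "e \<in> J" and "e \<notin> I"
    and side: "\<forall>u\<in>e. XV u \<in> C \<longleftrightarrow> u \<in> S"
  shows "\<not> cnf_sat (CNF E) (assignment_of X
      (\<lambda>x. if x \<in> C then matching_assignment M S I x else matching_assignment M S J x))"
    (is "\<not> cnf_sat _ (assignment_of X ?mix)")
proof -
  have "(XE e, True) \<notin> assignment_of X ?mix"
    using assms(2) by (simp add: matching_assignment_def)
  moreover have "(XV u, True) \<notin> assignment_of X ?mix" if "u \<in> e" for u
    using assms(2-4) side that by (cases "u \<in> S") (auto simp: matching_assignment_def)
  ultimately have "edge_clause e \<inter> assignment_of X ?mix = {}"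
    unfolding edge_clause_def by blast
  then show ?thesis
    using assms(1) unfolding cnf_sat_def CNF_def by blast
qed

lemma matching_assignments_fooling:
  assumes cm: "cross_matching V E S M" and "I \<subseteq> M" and "J \<subseteq> M"
    and side: "\<forall>u. XV u \<in> C \<longleftrightarrow> u \<in> S"
    and sat_IJ: "cnf_sat (CNF E) (assignment_of X
      (\<lambda>x. if x \<in> C then matching_assignment M S I x else matching_assignment M S J x))"
    and sat_JI: "cnf_sat (CNF E) (assignment_of X
      (\<lambda>x. if x \<in> C then matching_assignment M S J x else matching_assignment M S I x))"
  shows "I = J"
proof (rule ccontr)
  assume "I \<noteq> J"
  then obtain e where e: "e \<in> J \<and> e \<notin> I \<or> e \<in> I \<and> e \<notin> J"
    by blast
  with assms(2,3) have "e \<in> M"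
    by blast
  moreover have "M \<subseteq> E"
    using cm unfolding cross_matching_def by simp
  ultimately have "e \<in> E"
    by blast
  have side_e: "\<forall>u\<in>e. XV u \<in> C \<longleftrightarrow> u \<in> S"
    using side by blast
  from e show False
  proof
    assume "e \<in> J \<and> e \<notin> I"
    then have "e \<in> J" and "e \<notin> I" by simp_all
    from matching_assignment_mix_falsifies[OF \<open>e \<in> E\<close> \<open>e \<in> M\<close> this side_e] sat_IJ
    show False by contradiction
  next
    assume "e \<in> I \<and> e \<notin> J"
    then have "e \<in> I" and "e \<notin> J" by simp_all
    from matching_assignment_mix_falsifies[OF \<open>e \<in> E\<close> \<open>e \<in> M\<close> this side_e] sat_JI
    show False by contradiction
  qed
qed

section \<open>Cuts of large matching width\<close>

lemma mw_prefix_attained: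
  assumes "graph V E"
  shows "\<exists>M. cross_matching V E S M \<and> mw_prefix V E S = card M"
proof -
  have "{M. cross_matching V E S M} \<subseteq> Pow E"
    unfolding cross_matching_def by blast
  then have "finite {M. cross_matching V E S M}"
    using finite_edges[OF assms] by (simp add: finite_subset)
  then have "finite {card M | M. cross_matching V E S M}"
    by (simp add: setcompr_eq_image)
  moreover have "cross_matching V E S {}"
    unfolding cross_matching_def by simp
  then have "{card M | M. cross_matching V E S M} \<noteq> {}"
    by blast
  ultimately have "mw_prefix V E S \<in> {card M | M. cross_matching V E S M}"
    unfolding mw_prefix_def by (rule Max_in)
  then show ?thesis by blast
qed

lemma mw_perm_attained: "\<exists>k\<le>length SV. mw_perm V E SV = mw_prefix V E (set (take k SV))"
proof -
  have "finite {mw_prefix V E (set (take k SV)) | k. k \<le> length SV}"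
    by (simp add: setcompr_eq_image)
  then have "mw_perm V E SV \<in> {mw_prefix V E (set (take k SV)) | k. k \<le> length SV}"
    unfolding mw_perm_def by (intro Max_in) auto
  then show ?thesis by blast
qed

lemma matching_width_le_prefix_matching:
  assumes "graph V E" and "distinct \<pi>" and "set \<pi> = V"
  shows "\<exists>k M. cross_matching V E (set (take k \<pi>)) M \<and> matching_width V E \<le> card M"
proof -
  have "finite V"
    using assms(1) unfolding graph_def by simp
  have "{SV. distinct SV \<and> set SV = V} \<subseteq> {xs. set xs \<subseteq> V \<and> distinct xs}"
    by auto
  then have "finite {SV. distinct SV \<and> set SV = V}"
    by (rule finite_subset) (rule finite_subset_distinct[OF \<open>finite V\<close>])
  then have "matching_width V E \<le> mw_perm V E \<pi>"
    unfolding matching_width_def using assms(2,3) by (intro Min_le) auto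
  moreover obtain k where "mw_perm V E \<pi> = mw_prefix V E (set (take k \<pi>))"
    using mw_perm_attained by blast
  moreover obtain M where "cross_matching V E (set (take k \<pi>)) M"
    and "mw_prefix V E (set (take k \<pi>)) = card M"
    using mw_prefix_attained[OF assms(1)] by blast
  ultimately show ?thesis by auto
qed

definition vertex_order :: "'v cvar list \<Rightarrow> 'v list" where
  "vertex_order SV = [u. XV u \<leftarrow> SV]"

lemma set_vertex_order: "set (vertex_order SV) = {u. XV u \<in> set SV}"
  by (induction SV) (auto simp: vertex_order_def split: cvar.split)

lemma distinct_vertex_order: "distinct SV \<Longrightarrow> distinct (vertex_order SV)"
  by (induction SV) (auto simp: vertex_order_def split: cvar.split)

lemma take_vertex_order:
  "j \<le> length (vertex_order SV) \<Longrightarrow> \<exists>k. take j (vertex_order SV) = vertex_order (take k SV)"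
proof (induction SV arbitrary: j)
  case Nil
  then show ?case by (auto simp: vertex_order_def)
next
  case (Cons x SV)
  show ?case
  proof (cases x)
    case (XV u)
    show ?thesis
    proof (cases j)
      case 0
      then show ?thesis by (intro exI[of _ 0]) (simp add: vertex_order_def)
    next
      case (Suc j')
      with Cons.prems XV obtain k where "take j' (vertex_order SV) = vertex_order (take k SV)"
        using Cons.IH by (auto simp: vertex_order_def)
      with Suc XV show ?thesis
        by (intro exI[of _ "Suc k"]) (simp add: vertex_order_def)
    qed
  next
    case (XE e)
    with Cons.prems obtain k where "take j (vertex_order SV) = vertex_order (take k SV)"
      using Cons.IH by (auto simp: vertex_order_def)
    with XE show ?thesis
      by (intro exI[of _ "Suc k"]) (simp add: vertex_order_def)
  qed
qed

lemma vertex_order_prefix_cut: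
  "\<exists>k. \<forall>u. XV u \<in> set SV \<longrightarrow>
     (XV u \<in> set (take k SV) \<longleftrightarrow> u \<in> set (take j (vertex_order SV @ rest)))"
proof (cases "j \<le> length (vertex_order SV)")
  case True
  then obtain k where "take j (vertex_order SV) = vertex_order (take k SV)"
    using take_vertex_order by blast
  with True show ?thesis
    by (intro exI[of _ k]) (simp add: set_vertex_order)
next
  case False
  then have "set (vertex_order SV) \<subseteq> set (take j (vertex_order SV @ rest))"
    by simp
  then show ?thesis
    by (intro exI[of _ "length SV"]) (auto simp: set_vertex_order)
qed

lemma matching_width_cut:
  assumes "graph V E" and "distinct SV" and "{u. XV u \<in> set SV} \<subseteq> V"
  shows "\<exists>S M C. cross_matching V E S M \<and> matching_width V E \<le> card M \<and>
    down_closed SV C \<and> (\<forall>u. XV u \<in> C \<longleftrightarrow> u \<in> S)"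
proof -
  have "finite V"
    using assms(1) unfolding graph_def by simp
  then obtain rest where rest: "set rest = V - set (vertex_order SV)" "distinct rest"
    using finite_distinct_list by (meson finite_Diff)
  define \<pi> where "\<pi> = vertex_order SV @ rest"
  have "set (vertex_order SV) \<subseteq> V"
    using assms(3) by (simp add: set_vertex_order)
  with rest have "set \<pi> = V"
    unfolding \<pi>_def by auto
  have "distinct \<pi>"
    using rest distinct_vertex_order[OF assms(2)] unfolding \<pi>_def by auto
  with \<open>set \<pi> = V\<close> obtain j M where M: "cross_matching V E (set (take j \<pi>)) M"
    "matching_width V E \<le> card M"
    using matching_width_le_prefix_matching[OF assms(1)] by blast
  define S where "S = set (take j \<pi>)"
  obtain k where cut: "\<forall>u. XV u \<in> set SV \<longrightarrow> (XV u \<in> set (take k SV) \<longleftrightarrow> u \<in> S)"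
    using vertex_order_prefix_cut[of SV j rest] unfolding S_def \<pi>_def by blast
  define C where "C = set (take k SV) \<union> XV ` S"
  have "XV ` S \<inter> set SV \<subseteq> set (take k SV)"
    using cut by blast
  then have "down_closed SV C"
    unfolding C_def by (rule down_closed_Un[OF down_closed_take[OF assms(2)]])
  moreover have "XV u \<in> C \<longleftrightarrow> u \<in> S" for u
  proof
    assume "XV u \<in> C"
    then consider "XV u \<in> set (take k SV)" | "XV u \<in> XV ` S"
      unfolding C_def by blast
    then show "u \<in> S"
    proof cases
      case 1
      then show ?thesis using cut in_set_takeD by fast
    next
      case 2
      then show ?thesis by auto
    qed
  next
    assume "u \<in> S"
    then show "XV u \<in> C"
      unfolding C_def by blast
  qed
  moreover have "cross_matching V E S M"
    using M(1) unfolding S_def .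
  ultimately show ?thesis
    using M(2) by blast
qed

lemma two_powr_le_of_pow_le:
  fixes t :: int and m n d :: nat
  assumes "d \<ge> 1" and pow: "2 ^ m \<le> n ^ d" and "t \<le> int m"
  shows "2 powr (real_of_int t / real d) \<le> real n"
proof -
  have "n \<noteq> 0"
  proof
    assume "n = 0"
    with assms(1) have "n ^ d = 0" by simp
    with pow show False by simp
  qed
  have "2 powr (real_of_int t / real d) \<le> 2 powr (real m / real d)"
    using assms(1,3) by (intro powr_mono divide_right_mono) auto
  also have "\<dots> = real (2 ^ m) powr (1 / real d)"
    by (simp add: powr_powr powr_realpow [symmetric])
  also have "\<dots> \<le> real (n ^ d) powr (1 / real d)"
    using pow by (intro powr_mono2) (simp_all del: of_nat_power)
  also have "\<dots> = real n"
    using \<open>n \<noteq> 0\<close> assms(1) by (simp add: powr_realpow [symmetric] powr_powr)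
  finally show ?thesis .
qed

theorem theorem4:
  fixes V :: "'v set" and E :: "'v set set"
    and N :: "'n set" and A :: "('n, 'v cvar) bp_edge set" and r l :: 'n
    and c :: nat and t :: int
  assumes "c \<ge> 1"
    and "graph V E"
    and "int (matching_width V E) \<ge> t"
    and "c_NSOBDD c (cnf_vars V E) N A r l"
    and "bp_computes (cnf_vars V E) A r l (cnf_sat (CNF E))"
  shows "real (card N) \<ge> 2 powr (real_of_int t / (2 * real c - 1))"
proof -
  obtain SV where nbp: "nbp (cnf_vars V E) N A r l" and "distinct SV" and SV: "set SV = bp_vars A"
    and passes: "\<forall>es. computational_path A r l es \<longrightarrow> reads_in_passes c SV es"
    using assms(4) unfolding c_NSOBDD_iff_reads_in_passes by blast
  have "bp_vars A \<subseteq> cnf_vars V E"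
    using nbp unfolding nbp_def by simp
  with SV have "{u. XV u \<in> set SV} \<subseteq> V"
    by (auto simp: cnf_vars_def)
  then obtain S M C where M: "cross_matching V E S M" "matching_width V E \<le> card M"
    and C: "down_closed SV C" "\<forall>u. XV u \<in> C \<longleftrightarrow> u \<in> S"
    using matching_width_cut[OF assms(2) \<open>distinct SV\<close>] by blast
  have "card (Pow M) \<le> card N ^ (2 * c - 1)"
  proof (rule card_fooling_family_le[OF assms(1) nbp passes C(1) assms(5)])
    show "cnf_sat (CNF E) (assignment_of (cnf_vars V E) (matching_assignment M S I))" for I
      by (rule cnf_sat_matching_assignment[OF assms(2) M(1)])
    show "I = J" if "I \<in> Pow M" "J \<in> Pow M"
      and "cnf_sat (CNF E) (assignment_of (cnf_vars V E)
             (\<lambda>x. if x \<in> C then matching_assignment M S I x else matching_assignment M S J x))"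
      and "cnf_sat (CNF E) (assignment_of (cnf_vars V E)
             (\<lambda>x. if x \<in> C then matching_assignment M S J x else matching_assignment M S I x))"
      for I J
      using matching_assignments_fooling[OF M(1) _ _ C(2)] that by blast
  qed
  moreover have "finite M"
    using M(1) finite_edges[OF assms(2)] unfolding cross_matching_def by (meson finite_subset)
  ultimately have "2 ^ card M \<le> card N ^ (2 * c - 1)"
    by (simp add: card_Pow)
  moreover have "t \<le> int (card M)"
    using assms(3) M(2) by linarith
  moreover have "2 * real c - 1 = real (2 * c - 1)"
    using assms(1) by (simp add: of_nat_diff)
  ultimately show ?thesis
    using two_powr_le_of_pow_le[of "2 * c - 1"] assms(1) by simp
qed

end
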